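(* Let $(\Omega,\mathcal{F},\mathbb{P})$ be a complete probability space, let $E$ be a Polish space, and let $X=\{X_t\}_{t\geq0}$ be an $E$-valued stochastic process that is measurable, i.e. the map $(\omega,t)\mapsto X_t(\omega)$ is $\mathcal{F}\otimes\mathcal{B}([0,\infty))/\mathcal{B}(E)$-measurable. Let $AP$ be a set of atomic propositions and assign to each $a\in AP$ a Borel set $B_a\subset E$. Then for every MTL-formula $\phi$, the set $\llbracket\phi\rrbracket=\{(\omega,t)\in\Omega\times[0,\infty) : X(\omega),t\models\phi\}$ belongs to $\mathcal{F}\otimes\mathcal{B}([0,\infty))$, and for every $t\geq0$ the set $\llbracket\phi\rrbracket(t)=\{\omega\in\Omega : X(\omega),t\models\phi\}$ belongs to $\mathcal{F}$.
   Context: MTL-formulas are generated by the grammar $\phi::=a\mid\phi_1\wedge\phi_2\mid\lnot\phi\mid\phi_1\mathcal{U}_I\phi_2$, where $a\in AP$ and $I$ is an interval in $[0,\infty)$ (closed, open, or half-open; unbounded intervals allowed). The continuous semantics, for a path $X(\omega)$ ($\omega$ fixed) and $t\geq0$: $X(\omega),t\models a$ iff $X_t(\omega)\in B_a$; $X(\omega),t\models\lnot\phi$ iff not $X(\omega),t\models\phi$; $X(\omega),t\models\phi_1\wedge\phi_2$ iff both $X(\omega),t\models\phi_1$ and $X(\omega),t\models\phi_2$; $X(\omega),t\models\phi_1\mathcal{U}_I\phi_2$ iff there exists $s\in I$ such that $X(\omega),t+s\models\phi_2$ and for all $s'\in[t,t+s)$, $X(\omega),s'\models\phi_1$. A probability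 space is complete if every subset of a null set is measurable. *)

theory Defs
  imports "HOL-Probability.Probability"
begin

datatype interval = Intv (lower: real) (lower_closed: bool) (upper: ereal) (upper_closed: bool)

definition intv_set :: "interval \<Rightarrow> real set" where
  "intv_set I = {s. 0 \<le> s \<and>
      (if lower_closed I then lower I \<le> s else lower I < s) \<and>
      (if upper_closed I then ereal s \<le> upper I else ereal s < upper I)}"

datatype 'ap mtl =
    Atom 'ap
  | And "'ap mtl" "'ap mtl"
  | Not "'ap mtl"
  | Until "'ap mtl" interval "'ap mtl"

fun holds :: "(real \<Rightarrow> 'w \<Rightarrow> 'e) \<Rightarrow> ('ap \<Rightarrow> 'e set) \<Rightarrow> 'w \<Rightarrow> real \<Rightarrow> 'ap mtl \<Rightarrow> bool" where
  "holds X B \<omega> t (Atom a) \<longleftrightarrow> X t \<omega> \<in> B a"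
| "holds X B \<omega> t (And \<phi>1 \<phi>2) \<longleftrightarrow> holds X B \<omega> t \<phi>1 \<and> holds X B \<omega> t \<phi>2"
| "holds X B \<omega> t (Not \<phi>) \<longleftrightarrow> \<not> holds X B \<omega> t \<phi>"
| "holds X B \<omega> t (Until \<phi>1 I \<phi>2) \<longleftrightarrow>
     (\<exists>s\<in>intv_set I. holds X B \<omega> (t + s) \<phi>2 \<and>
        (\<forall>s'\<in>{t..<t + s}. holds X B \<omega> s' \<phi>1))"

definition sat_set :: "'w measure \<Rightarrow> (real \<Rightarrow> 'w \<Rightarrow> 'e) \<Rightarrow> ('ap \<Rightarrow> 'e set) \<Rightarrow> 'ap mtl \<Rightarrow> ('w \<times> real) set" where
  "sat_set M X B \<phi> = {(\<omega>, t). \<omega> \<in> space M \<and> 0 \<le> t \<and> holds X B \<omega> t \<phi>}"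

definition sat_set_at :: "'w measure \<Rightarrow> (real \<Rightarrow> 'w \<Rightarrow> 'e) \<Rightarrow> ('ap \<Rightarrow> 'e set) \<Rightarrow> 'ap mtl \<Rightarrow> real \<Rightarrow> 'w set" where
  "sat_set_at M X B \<phi> t = {\<omega> \<in> space M. holds X B \<omega> t \<phi>}"

end

theory Submission
  imports Defs
begin

text \<open>Every set in \<open>\<F> \<otimes> \<B>([0,\<infinity>))\<close> is obtained by the Suslin operation from rectangles
  \<open>F \<times> K\<close> with \<open>F \<in> \<F>\<close> and \<open>K\<close> compact: the sets which are Suslin together with their
  complement form a \<open>\<sigma>\<close>-algebra containing the generators. Compactness of the fibres lets the
  projection to \<open>\<Omega>\<close> commute with the Suslin operation, and in a complete finite measure space
  Suslin sets of measurable sets are measurable. So projections, and hence debuts, of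
  product-measurable sets are measurable. For \<open>\<phi>1 U\<^sub>I \<phi>2\<close>, "\<open>\<phi>1\<close> holds on \<open>[t, u)\<close>" says that
  \<open>u\<close> is at most the debut after \<open>t\<close> of the complement of \<open>[[\<phi>1]]\<close>; thus \<open>[[\<phi>1 U\<^sub>I \<phi>2]]\<close>
  consists of the \<open>(\<omega>, t)\<close> whose section of \<open>[[\<phi>2]]\<close> meets an interval with measurable
  endpoints, which is measurable since the infimum of that section above the lower endpoint is
  measurable and either lies below the upper endpoint or is attained. The slices \<open>[[\<phi>]](t)\<close>
  are sections of \<open>[[\<phi>]]\<close>.\<close>

section \<open>The Suslin operation\<close>

definition suslin :: "(nat list \<Rightarrow> 'a set) \<Rightarrow> 'a set" where
  "suslin E = (\<Union>\<sigma>. \<Inter>n. E (map \<sigma> [0..<Suc n]))"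

lemma mem_suslin_iff: "x \<in> suslin E \<longleftrightarrow> (\<exists>\<sigma>. \<forall>n. x \<in> E (map \<sigma> [0..<Suc n]))"
  unfolding suslin_def by blast

lemma suslin_UN_eq:
  "(\<Union>k. suslin (S k)) = suslin (\<lambda>s. S (fst (prod_decode (hd s))) (snd (prod_decode (hd s)) # tl s))"
  (is "_ = suslin ?T")
proof (intro set_eqI iffI)
  fix x assume "x \<in> (\<Union>k. suslin (S k))"
  then obtain k \<tau> where \<tau>: "\<And>n. x \<in> S k (map \<tau> [0..<Suc n])" unfolding suslin_def by blast
  define \<sigma> where "\<sigma> i = (if i = 0 then prod_encode (k, \<tau> 0) else \<tau> i)" for i
  have "x \<in> ?T (map \<sigma> [0..<Suc n])" for n
    using \<tau>[of n] unfolding map_upt_Suc \<sigma>_def by simp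
  then show "x \<in> suslin ?T" unfolding suslin_def by blast
next
  fix x assume "x \<in> suslin ?T"
  then obtain \<sigma> where \<sigma>: "\<And>n. x \<in> ?T (map \<sigma> [0..<Suc n])" unfolding suslin_def by blast
  define \<tau> where "\<tau> i = (if i = 0 then snd (prod_decode (\<sigma> 0)) else \<sigma> i)" for i
  have "x \<in> S (fst (prod_decode (\<sigma> 0))) (map \<tau> [0..<Suc n])" for n
    using \<sigma>[of n] unfolding map_upt_Suc \<tau>_def by simp
  then have "x \<in> suslin (S (fst (prod_decode (\<sigma> 0))))" unfolding suslin_def by blast
  then show "x \<in> (\<Union>k. suslin (S k))" by blast
qed

lemma mono_prod_encode: "mono (\<lambda>i. prod_encode (k, i))"
  by (rule monoI) (simp add: prod_encode_def triangle_def div_le_mono mult_le_mono add_mono)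

lemma map_nth_map_upt:
  assumes "\<And>i. i \<le> m \<Longrightarrow> f i < n"
  shows "map (\<lambda>i. map \<sigma> [0..<n] ! f i) [0..<Suc m] = map (\<lambda>i. \<sigma> (f i)) [0..<Suc m]"
  using assms by (intro map_cong) (auto simp del: upt_Suc)

text \<open>The words for all \<open>S k\<close> are interleaved: the \<open>k\<close>-th one is read at the positions
  \<open>prod_encode (k, i)\<close>.\<close>
lemma suslin_INT_eq:
  "(\<Inter>k. suslin (S k)) = suslin (\<lambda>s. \<Inter>(k, m)\<in>{(k, m). prod_encode (k, m) < length s}.
      S k (map (\<lambda>i. s ! prod_encode (k, i)) [0..<Suc m]))"
  (is "_ = suslin ?T")
proof -
  have enc_le: "prod_encode (k, i) \<le> prod_encode (k, m)" if "i \<le> m" for k i m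
    using mono_prod_encode that by (rule monoD)
  have restrict: "map (\<lambda>i. map \<sigma> [0..<n] ! prod_encode (k, i)) [0..<Suc m] =
      map (\<lambda>i. \<sigma> (prod_encode (k, i))) [0..<Suc m]" if "prod_encode (k, m) < n" for \<sigma> n k m
    by (rule map_nth_map_upt) (rule le_less_trans[OF enc_le that])
  show ?thesis
  proof (intro set_eqI iffI)
    fix x assume "x \<in> (\<Inter>k. suslin (S k))"
    then have "\<forall>k. \<exists>\<tau>. \<forall>n. x \<in> S k (map \<tau> [0..<Suc n])" by (simp add: mem_suslin_iff)
    then obtain \<tau> where \<tau>: "\<And>k n. x \<in> S k (map (\<tau> k) [0..<Suc n])" unfolding choice_iff by blast
    define \<sigma> where "\<sigma> j = \<tau> (fst (prod_decode j)) (snd (prod_decode j))" for j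
    have "x \<in> ?T (map \<sigma> [0..<Suc n])" for n
    proof -
      have "x \<in> S k (map (\<lambda>i. map \<sigma> [0..<Suc n] ! prod_encode (k, i)) [0..<Suc m])"
        if "prod_encode (k, m) < Suc n" for k m
        using \<tau>[of k m] by (simp only: restrict[OF that]) (simp add: \<sigma>_def)
      then show ?thesis by (auto simp del: upt_Suc)
    qed
    then show "x \<in> suslin ?T" unfolding mem_suslin_iff by (rule exI[of _ \<sigma>, OF allI])
  next
    fix x assume "x \<in> suslin ?T"
    then obtain \<sigma> where \<sigma>: "\<And>n. x \<in> ?T (map \<sigma> [0..<Suc n])" unfolding mem_suslin_iff by blast
    have "x \<in> S k (map (\<lambda>i. \<sigma> (prod_encode (k, i))) [0..<Suc m])" for k m
    proof -
      have "x \<in> S k (map (\<lambda>i. map \<sigma> [0..<Suc (prod_encode (k, m))] ! prod_encode (k, i)) [0..<Suc m])"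
        using \<sigma>[of "prod_encode (k, m)"] by (auto simp del: upt_Suc)
      then show ?thesis by (simp only: restrict[OF lessI])
    qed
    then show "x \<in> (\<Inter>k. suslin (S k))" by (auto simp: mem_suslin_iff)
  qed
qed

lemma take_map_upt: "j \<le> n \<Longrightarrow> take (Suc j) (map \<sigma> [0..<Suc n]) = map \<sigma> [0..<Suc j]"
  by (simp add: take_map del: upt_Suc)

lemma suslin_cumulative: "suslin E = suslin (\<lambda>s. \<Inter>j<length s. E (take (Suc j) s))"
proof -
  have "(\<Inter>j<length (map \<sigma> [0..<Suc n]). E (take (Suc j) (map \<sigma> [0..<Suc n]))) =
      (\<Inter>j\<le>n. E (map \<sigma> [0..<Suc j]))" for \<sigma> n
    by (simp add: lessThan_Suc_atMost del: upt_Suc) (intro INF_cong refl, simp add: take_map_upt del: upt_Suc)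
  then show ?thesis
    unfolding set_eq_iff mem_suslin_iff by (simp del: upt_Suc) blast
qed

lemma mem_suslinI_branching:
  assumes root: "x \<in> G []" and branch: "\<And>s. x \<in> G s \<Longrightarrow> \<exists>i. x \<in> G (s @ [i])"
    and sub: "\<And>s. s \<noteq> [] \<Longrightarrow> G s \<subseteq> E s"
  shows "x \<in> suslin E"
proof -
  obtain f where f: "\<And>s. x \<in> G s \<Longrightarrow> x \<in> G (s @ [f s])" using branch by metis
  define p where "p = rec_nat [] (\<lambda>_ s. s @ [f s])"
  have p_Suc: "p (Suc n) = p n @ [f (p n)]" for n unfolding p_def by simp
  have "x \<in> G (p n)" for n
    by (induction n) (simp_all add: p_def root f)
  moreover have "p n = map (\<lambda>i. f (p i)) [0..<n]" for n
    by (induction n) (simp_all add: p_def p_Suc)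
  ultimately have "x \<in> E (map (\<lambda>i. f (p i)) [0..<Suc n])" for n
    using sub by (metis Nil_is_append_conv not_Cons_self2 p_Suc subsetD)
  then show ?thesis unfolding suslin_def by blast
qed

lemma (in finite_measure) exists_measurable_hull:
  assumes "S \<subseteq> space M"
  shows "\<exists>H. H \<in> sets M \<and> S \<subseteq> H \<and> (\<forall>D\<in>sets M. D \<subseteq> H - S \<longrightarrow> D \<in> null_sets M)"
proof -
  define m where "m = (INF G \<in> {G \<in> sets M. S \<subseteq> G}. measure M G)"
  have m_le: "m \<le> measure M G" if "G \<in> sets M" "S \<subseteq> G" for G
    unfolding m_def using that by (intro cINF_lower bdd_belowI2[of _ 0]) auto
  have "\<exists>G. G \<in> sets M \<and> S \<subseteq> G \<and> measure M G < m + 1 / Suc n" for n :: nat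
  proof -
    have "{G \<in> sets M. S \<subseteq> G} \<noteq> {}" using assms by auto
    moreover have "m < m + 1 / Suc n" by simp
    ultimately show ?thesis unfolding m_def by (subst (asm) cINF_less_iff) (auto intro: bdd_belowI2[of _ 0])
  qed
  then obtain G where G: "\<And>n. G n \<in> sets M" "\<And>n. S \<subseteq> G n" "\<And>n. measure M (G n) < m + 1 / Suc n"
    by metis
  define H where "H = (\<Inter>n. G n)"
  have H: "H \<in> sets M" "S \<subseteq> H" unfolding H_def using G by auto
  have "measure M H \<le> m"
  proof (rule field_le_epsilon)
    fix e :: real assume "0 < e"
    then obtain n :: nat where n: "1 / Suc n < e" by (metis nat_approx_posE)
    have "measure M H \<le> measure M (G n)"
      using G H unfolding H_def by (intro finite_measure_mono) auto
    then show "measure M H \<le> m + e" using G(3)[of n] n by simp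
  qed
  moreover have "measure M D = 0" if "D \<in> sets M" "D \<subseteq> H - S" for D
  proof -
    have "m \<le> measure M (H - D)" using that H by (intro m_le) auto
    also have "\<dots> = measure M H - measure M D"
      using that H by (intro finite_measure_Diff) auto
    finally show ?thesis using \<open>measure M H \<le> m\<close> measure_nonneg[of M D] by linarith
  qed
  ultimately show ?thesis using H by (auto simp: emeasure_eq_measure null_sets_def)
qed

definition suslin_through :: "(nat list \<Rightarrow> 'a set) \<Rightarrow> nat list \<Rightarrow> 'a set" where
  "suslin_through E s = (\<Union>\<sigma>\<in>{\<sigma>. map \<sigma> [0..<length s] = s}. \<Inter>n. E (map \<sigma> [0..<Suc n]))"

lemma suslin_through_Nil: "suslin_through E [] = suslin E"
  unfolding suslin_through_def suslin_def by simp

lemma suslin_through_subset: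
  assumes "s \<noteq> []"
  shows "suslin_through E s \<subseteq> E s"
proof -
  obtain n where "length s = Suc n" using assms by (cases s) auto
  then show ?thesis unfolding suslin_through_def by auto
qed

lemma suslin_through_branch: "suslin_through E s \<subseteq> (\<Union>i. suslin_through E (s @ [i]))"
proof
  fix x assume "x \<in> suslin_through E s"
  then obtain \<sigma> where "x \<in> (\<Inter>n. E (map \<sigma> [0..<Suc n]))" "map \<sigma> [0..<length s] = s"
    unfolding suslin_through_def by blast
  then have "x \<in> suslin_through E (s @ [\<sigma> (length s)])" unfolding suslin_through_def by auto
  then show "x \<in> (\<Union>i. suslin_through E (s @ [i]))" by blast
qed

lemma suslin_in_sets_complete:
  assumes "finite_measure M" "complete_measure M"
    and E: "\<And>s. s \<noteq> [] \<Longrightarrow> E s \<in> sets M"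
  shows "suslin E \<in> sets M"
proof -
  interpret finite_measure M by fact
  \<comment> \<open>Take measurable hulls \<open>H s\<close> of the pieces \<open>suslin_through E s\<close>. Outside the null set \<open>N\<close>
    where the hulls fail to branch, every point of \<open>H []\<close> follows an infinite branch of hulls.\<close>
  have A_space: "suslin_through E s \<subseteq> space M" for s
  proof (cases "s = []")
    case True
    have "suslin_through E [i] \<subseteq> space M" for i
      using suslin_through_subset[of "[i]" E] E[of "[i]"] sets.sets_into_space by blast
    then show ?thesis using True suslin_through_branch[of E "[]"] by (simp; blast)
  next
    case False
    then show ?thesis using suslin_through_subset[of s E] E[of s] sets.sets_into_space by blast
  qed
  define H0 where "H0 s = (SOME H. H \<in> sets M \<and> suslin_through E s \<subseteq> H \<and>
      (\<forall>D\<in>sets M. D \<subseteq> H - suslin_through E s \<longrightarrow> D \<in> null_sets M))" for s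
  have H0: "H0 s \<in> sets M \<and> suslin_through E s \<subseteq> H0 s \<and>
      (\<forall>D\<in>sets M. D \<subseteq> H0 s - suslin_through E s \<longrightarrow> D \<in> null_sets M)" for s
    unfolding H0_def by (rule someI_ex) (rule exists_measurable_hull[OF A_space])
  define H where "H s = H0 s \<inter> (if s = [] then space M else E s)" for s
  have H_sets: "H s \<in> sets M" for s
    unfolding H_def using H0[of s] E[of s] by (intro sets.Int) auto
  have H_sup: "suslin_through E s \<subseteq> H s" for s
    unfolding H_def using H0[of s] A_space[of s] suslin_through_subset[of s E] by auto
  define N where "N = (\<Union>s. H s - (\<Union>i. H (s @ [i])))"
  have "H s - (\<Union>i. H (s @ [i])) \<in> null_sets M" for s
  proof -
    have "H s - (\<Union>i. H (s @ [i])) \<subseteq> H0 s - suslin_through E s"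
    proof
      fix x assume x: "x \<in> H s - (\<Union>i. H (s @ [i]))"
      have "x \<notin> suslin_through E s"
      proof
        assume "x \<in> suslin_through E s"
        then obtain i where "x \<in> suslin_through E (s @ [i])" using suslin_through_branch[of E s] by blast
        then show False using x H_sup[of "s @ [i]"] by blast
      qed
      then show "x \<in> H0 s - suslin_through E s" using x unfolding H_def by blast
    qed
    moreover have "H s - (\<Union>i. H (s @ [i])) \<in> sets M" using H_sets by blast
    moreover have "\<forall>D\<in>sets M. D \<subseteq> H0 s - suslin_through E s \<longrightarrow> D \<in> null_sets M"
      using H0[of s] by (elim conjE)
    ultimately show ?thesis by blast
  qed
  then have N: "N \<in> null_sets M" unfolding N_def by (intro null_sets_UN') auto
  have lower: "H [] - N \<subseteq> suslin E"
  proof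
    fix x assume x: "x \<in> H [] - N"
    show "x \<in> suslin E"
    proof (rule mem_suslinI_branching[of x H])
      show "\<exists>i. x \<in> H (s @ [i])" if "x \<in> H s" for s
        using x that unfolding N_def by blast
    qed (use x in \<open>auto simp: H_def\<close>)
  qed
  have upper: "suslin E \<subseteq> H []"
    using H_sup[of "[]"] by (simp add: suslin_through_Nil)
  have "suslin E = (H [] - N) \<union> (suslin E \<inter> N)"
    using lower upper by blast
  also have "\<dots> \<in> sets M"
  proof (rule sets.Un)
    show "H [] - N \<in> sets M" by (intro sets.Diff H_sets null_setsD2[OF N])
    show "suslin E \<inter> N \<in> sets M" by (rule complete_measure.complete[OF assms(2) _ N]) blast
  qed
  finally show ?thesis .
qed

section \<open>Suslin sets of compact rectangles\<close>

definition compact_rects :: "'a measure \<Rightarrow> ('a \<times> 'b::topological_space) set set" where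
  "compact_rects M = {F \<times> K | F K. F \<in> sets M \<and> compact K}"

definition suslin_rects :: "'a measure \<Rightarrow> ('a \<times> 'b::topological_space) set set" where
  "suslin_rects M = {suslin E | E. \<forall>s. s \<noteq> [] \<longrightarrow> E s \<in> compact_rects M}"

lemma empty_in_compact_rects: "{} \<in> compact_rects M"
  unfolding compact_rects_def by blast

lemma INT_Times_eq:
  "I \<noteq> {} \<Longrightarrow> (\<Inter>i\<in>I. A i \<times> B i) = (\<Inter>i\<in>I. A i) \<times> (\<Inter>i\<in>I. B i)"
  by auto

lemma Inter_in_compact_rects:
  fixes \<R> :: "('a \<times> 'b::heine_borel) set set"
  assumes "countable \<R>" "\<R> \<noteq> {}" "\<R> \<subseteq> compact_rects M"
  shows "\<Inter>\<R> \<in> compact_rects M"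
proof -
  have "\<forall>R\<in>\<R>. \<exists>FK. fst FK \<times> snd FK = R \<and> fst FK \<in> sets M \<and> compact (snd FK)"
  proof
    fix R assume "R \<in> \<R>"
    then obtain F K where "R = F \<times> K" "F \<in> sets M" "compact K"
      using assms(3) unfolding compact_rects_def by blast
    then show "\<exists>FK. fst FK \<times> snd FK = R \<and> fst FK \<in> sets M \<and> compact (snd FK)"
      by (intro exI[of _ "(F, K)"]) simp
  qed
  then obtain g where g: "\<forall>R\<in>\<R>. fst (g R) \<times> snd (g R) = R \<and> fst (g R) \<in> sets M \<and> compact (snd (g R))"
    by (rule bchoice[THEN exE]) blast
  have "\<Inter>\<R> = (\<Inter>R\<in>\<R>. fst (g R) \<times> snd (g R))"
    using g by blast
  also have "\<dots> = (\<Inter>R\<in>\<R>. fst (g R)) \<times> (\<Inter>R\<in>\<R>. snd (g R))"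
    using \<open>\<R> \<noteq> {}\<close> by (rule INT_Times_eq)
  also have "\<dots> \<in> compact_rects M"
  proof -
    have "(\<Inter>R\<in>\<R>. fst (g R)) \<in> sets M"
      using g assms(1,2) by (intro sets.countable_INT') auto
    moreover have "compact (\<Inter>R\<in>\<R>. snd (g R))"
      using g \<open>\<R> \<noteq> {}\<close> by (intro compact_Inter) auto
    ultimately show ?thesis unfolding compact_rects_def by blast
  qed
  finally show ?thesis .
qed

lemma compact_rects_subset_suslin_rects: "compact_rects M \<subseteq> suslin_rects M"
proof
  fix R assume "R \<in> compact_rects M"
  moreover have "suslin (\<lambda>_. R) = R" unfolding suslin_def by simp
  ultimately show "R \<in> suslin_rects M" unfolding suslin_rects_def by blast
qed

lemma suslin_rects_choice:
  assumes "\<And>k::nat. A k \<in> suslin_rects M"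
  shows "\<exists>S. \<forall>k. (\<forall>s. s \<noteq> [] \<longrightarrow> S k s \<in> compact_rects M) \<and> A k = suslin (S k)"
proof -
  have "\<forall>k. \<exists>E. (\<forall>s. s \<noteq> [] \<longrightarrow> E s \<in> compact_rects M) \<and> A k = suslin E"
    using assms unfolding suslin_rects_def by blast
  then show ?thesis by (rule choice)
qed

lemma suslin_rectsI: "(\<And>s. s \<noteq> [] \<Longrightarrow> E s \<in> compact_rects M) \<Longrightarrow> suslin E \<in> suslin_rects M"
  unfolding suslin_rects_def by blast

lemma suslin_rects_UN:
  assumes "\<And>k::nat. A k \<in> suslin_rects M"
  shows "(\<Union>k. A k) \<in> suslin_rects M"
proof -
  obtain S where S: "\<forall>k. (\<forall>s. s \<noteq> [] \<longrightarrow> S k s \<in> compact_rects M) \<and> A k = suslin (S k)"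
    using suslin_rects_choice[OF assms] ..
  then have "(\<Union>k. A k) = suslin (\<lambda>s. S (fst (prod_decode (hd s))) (snd (prod_decode (hd s)) # tl s))"
    by (simp add: suslin_UN_eq)
  also have "\<dots> \<in> suslin_rects M"
    using S by (intro suslin_rectsI) simp
  finally show ?thesis .
qed

lemma suslin_rects_INT:
  fixes A :: "nat \<Rightarrow> ('a \<times> 'b::heine_borel) set"
  assumes "\<And>k. A k \<in> suslin_rects M"
  shows "(\<Inter>k. A k) \<in> suslin_rects M"
proof -
  obtain S where S: "\<forall>k. (\<forall>s. s \<noteq> [] \<longrightarrow> S k s \<in> compact_rects M) \<and> A k = suslin (S k)"
    using suslin_rects_choice[OF assms] ..
  define T where "T s = (\<lambda>(k, m). S k (map (\<lambda>i. s ! prod_encode (k, i)) [0..<Suc m])) `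
      {(k, m). prod_encode (k, m) < length s}" for s
  have "(\<Inter>k. A k) = suslin (\<lambda>s. \<Inter>(T s))"
    unfolding T_def using S by (simp add: suslin_INT_eq)
  also have "\<dots> \<in> suslin_rects M"
  proof (intro suslin_rectsI Inter_in_compact_rects)
    fix s :: "nat list" assume "s \<noteq> []"
    show "countable (T s)" unfolding T_def by (intro countable_image countableI_type)
    have "(0, 0) \<in> {(k, m). prod_encode (k, m) < length s}"
      using \<open>s \<noteq> []\<close> by (simp add: prod_encode_def)
    then show "T s \<noteq> {}" unfolding T_def by blast
    show "T s \<subseteq> compact_rects M"
      unfolding T_def using S by (auto simp del: upt_Suc)
  qed
  finally show ?thesis .
qed

lemma fst_image_INT_decseq_compact_rects:
  fixes R :: "nat \<Rightarrow> ('a \<times> 'b::heine_borel) set"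
  assumes R: "\<And>n. R n \<in> compact_rects M" and "decseq R"
  shows "fst ` (\<Inter>n. R n) = (\<Inter>n. fst ` R n)"
proof
  show "(\<Inter>n. fst ` R n) \<subseteq> fst ` (\<Inter>n. R n)"
  proof
    fix \<omega> assume \<omega>: "\<omega> \<in> (\<Inter>n. fst ` R n)"
    define K where "K n = {t. (\<omega>, t) \<in> R n}" for n
    have "\<Inter>(range K) \<noteq> {}"
    proof (rule compact_nest)
      fix n
      obtain F L where "R n = F \<times> L" "compact L" using R[of n] unfolding compact_rects_def by blast
      then have "K n = (if \<omega> \<in> F then L else {})" unfolding K_def by auto
      with \<open>compact L\<close> show "compact (K n)" by simp
      have "\<omega> \<in> fst ` R n" using \<omega> by blast
      then show "K n \<noteq> {}" unfolding K_def by (auto simp: image_iff)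
    next
      fix m n :: nat assume "m \<le> n"
      then show "K n \<subseteq> K m" using \<open>decseq R\<close> unfolding K_def decseq_def by blast
    qed
    then obtain t where "(\<omega>, t) \<in> (\<Inter>n. R n)" unfolding K_def by blast
    then show "\<omega> \<in> fst ` (\<Inter>n. R n)" by (rule rev_image_eqI) simp
  qed
qed auto

lemma fst_image_suslin:
  fixes E :: "nat list \<Rightarrow> ('a \<times> 'b::heine_borel) set"
  assumes E: "\<And>s. s \<noteq> [] \<Longrightarrow> E s \<in> compact_rects M"
  shows "fst ` suslin E = suslin (\<lambda>s. fst ` (\<Inter>j<length s. E (take (Suc j) s)))"
proof -
  define E' where "E' s = (\<Inter>j<length s. E (take (Suc j) s))" for s
  have "fst ` (\<Inter>n. E' (map \<sigma> [0..<Suc n])) = (\<Inter>n. fst ` E' (map \<sigma> [0..<Suc n]))" for \<sigma>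
  proof (rule fst_image_INT_decseq_compact_rects)
    show "E' (map \<sigma> [0..<Suc n]) \<in> compact_rects M" for n
      unfolding E'_def using E by (intro Inter_in_compact_rects) (auto simp del: upt_Suc)
    show "decseq (\<lambda>n. E' (map \<sigma> [0..<Suc n]))"
      unfolding E'_def by (intro decseq_SucI) (auto simp del: upt_Suc simp: take_map_upt)
  qed
  then have "fst ` suslin E' = suslin (\<lambda>s. fst ` E' s)"
    unfolding suslin_def image_UN by simp
  then show ?thesis unfolding E'_def suslin_cumulative[of E] .
qed

lemma fst_image_compact_rect: "R \<in> compact_rects M \<Longrightarrow> fst ` R \<in> sets M"
  unfolding compact_rects_def by auto

lemma fst_image_suslin_rects_in_sets:
  fixes A :: "('a \<times> 'b::heine_borel) set"
  assumes "finite_measure M" "complete_measure M" and "A \<in> suslin_rects M"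
  shows "fst ` A \<in> sets M"
proof -
  obtain E where E: "\<And>s. s \<noteq> [] \<Longrightarrow> E s \<in> compact_rects M" and A: "A = suslin E"
    using assms(3) unfolding suslin_rects_def by auto
  have "suslin (\<lambda>s. fst ` (\<Inter>j<length s. E (take (Suc j) s))) \<in> sets M"
  proof (rule suslin_in_sets_complete[OF assms(1,2)])
    fix s :: "nat list" assume "s \<noteq> []"
    then have "(\<Inter>j<length s. E (take (Suc j) s)) \<in> compact_rects M"
      using E by (intro Inter_in_compact_rects) auto
    then show "fst ` (\<Inter>j<length s. E (take (Suc j) s)) \<in> sets M" by (rule fst_image_compact_rect)
  qed
  then show ?thesis by (simp add: A fst_image_suslin[OF E])
qed

section \<open>The measurable projection theorem\<close>

lemma sigma_algebra_complemented_members: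
  assumes "{} \<in> \<S>" "\<Omega> \<in> \<S>"
    and UN: "\<And>A. (\<And>i::nat. A i \<in> \<S>) \<Longrightarrow> (\<Union>i. A i) \<in> \<S>"
    and INT: "\<And>A. (\<And>i::nat. A i \<in> \<S>) \<Longrightarrow> (\<Inter>i. A i) \<in> \<S>"
  shows "sigma_algebra \<Omega> {A. A \<subseteq> \<Omega> \<and> A \<in> \<S> \<and> \<Omega> - A \<in> \<S>}"
  unfolding sigma_algebra_iff2
proof (intro conjI allI ballI impI)
  show "{A. A \<subseteq> \<Omega> \<and> A \<in> \<S> \<and> \<Omega> - A \<in> \<S>} \<subseteq> Pow \<Omega>" by blast
  show "{} \<in> {A. A \<subseteq> \<Omega> \<and> A \<in> \<S> \<and> \<Omega> - A \<in> \<S>}" using assms(1,2) by simp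
next
  fix A assume "A \<in> {A. A \<subseteq> \<Omega> \<and> A \<in> \<S> \<and> \<Omega> - A \<in> \<S>}"
  then show "\<Omega> - A \<in> {A. A \<subseteq> \<Omega> \<and> A \<in> \<S> \<and> \<Omega> - A \<in> \<S>}"
    by (simp add: Diff_Diff_Int Int_absorb1)
next
  fix A :: "nat \<Rightarrow> _" assume "range A \<subseteq> {A. A \<subseteq> \<Omega> \<and> A \<in> \<S> \<and> \<Omega> - A \<in> \<S>}"
  then have A: "\<And>i. A i \<subseteq> \<Omega>" "\<And>i. A i \<in> \<S>" "\<And>i. \<Omega> - A i \<in> \<S>" by auto
  have "\<Omega> - (\<Union>i. A i) = (\<Inter>i. \<Omega> - A i)" by blast
  then show "(\<Union>i. A i) \<in> {A. A \<subseteq> \<Omega> \<and> A \<in> \<S> \<and> \<Omega> - A \<in> \<S>}"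
    using A UN[of A] INT[of "\<lambda>i. \<Omega> - A i"] by auto
qed

lemma times_closed_in_suslin_rects:
  fixes K :: "'b::{heine_borel, real_normed_vector} set"
  assumes "F \<in> sets M" "closed K"
  shows "F \<times> K \<in> suslin_rects M"
proof -
  have "F \<times> K = (\<Union>n. F \<times> (K \<inter> cball 0 (real n)))"
    using real_arch_simple by (fastforce simp: dist_0_norm)
  also have "\<dots> \<in> suslin_rects M"
  proof (intro suslin_rects_UN subsetD[OF compact_rects_subset_suslin_rects])
    fix n
    have "compact (K \<inter> cball 0 (real n))" using \<open>closed K\<close> by (intro closed_Int_compact) auto
    then show "F \<times> (K \<inter> cball 0 (real n)) \<in> compact_rects M"
      using \<open>F \<in> sets M\<close> unfolding compact_rects_def by blast
  qed
  finally show ?thesis .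
qed

lemma nonneg_greaterThan_eq_UN: "{t::real. 0 \<le> t \<and> a < t} = (\<Union>n. {max 0 (a + 1 / Suc n)..})"
proof (intro set_eqI iffI)
  fix t assume t: "t \<in> {t. 0 \<le> t \<and> a < t}"
  then obtain n where "inverse (real (Suc n)) < t - a" using reals_Archimedean[of "t - a"] by auto
  then have "max 0 (a + 1 / Suc n) \<le> t" using t by (simp add: inverse_eq_divide)
  then show "t \<in> (\<Union>n. {max 0 (a + 1 / Suc n)..})" by blast
next
  fix t assume "t \<in> (\<Union>n. {max 0 (a + 1 / Suc n)..})"
  then obtain n :: nat where "0 \<le> t" "a + 1 / Suc n \<le> t" by auto
  moreover have "a < a + 1 / Suc n" by simp
  ultimately show "t \<in> {t. 0 \<le> t \<and> a < t}" by (intro CollectI conjI) linarith+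
qed

abbreviation halfline :: "real measure" where
  "halfline \<equiv> restrict_space borel {0..}"

lemma space_pair_halfline: "space (M \<Otimes>\<^sub>M halfline) = space M \<times> {0..}"
  by (simp add: space_pair_measure space_restrict_space)

lemma measurable_snd_halfline: "snd \<in> borel_measurable (M \<Otimes>\<^sub>M halfline)"
  using measurable_snd[of M halfline] by (simp add: measurable_restrict_space2_iff)

lemma sets_pair_halfline_subset:
  assumes "sigma_algebra (space M \<times> {0..}) C"
    and fst_gen: "\<And>F. F \<in> sets M \<Longrightarrow> F \<times> {0..} \<in> C"
    and snd_gen: "\<And>a. space M \<times> {0..a} \<in> C"
  shows "sets (M \<Otimes>\<^sub>M halfline) \<subseteq> C"
proof
  define N where "N = sigma (space M \<times> {0::real..}) C"
  have space_N: "space N = space M \<times> {0..}" and sets_N: "sets N = C"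
    unfolding N_def using assms(1)
    by (simp_all add: sigma_algebra.space_measure_of_eq sigma_algebra.sets_measure_of_eq)
  have "fst \<in> measurable N M"
  proof (rule measurableI)
    show "fst p \<in> space M" if "p \<in> space N" for p using that by (auto simp: space_N)
    show "fst -` F \<inter> space N \<in> sets N" if F: "F \<in> sets M" for F
    proof -
      have "fst -` F \<inter> space N = F \<times> {0..}"
        using sets.sets_into_space[OF F] by (auto simp: space_N)
      then show ?thesis using fst_gen[OF F] by (simp add: sets_N)
    qed
  qed
  moreover have "snd \<in> measurable N halfline"
  proof (rule measurable_restrict_space2)
    show "snd \<in> space N \<rightarrow> {0..}" by (auto simp: space_N)
    have "{p \<in> space N. snd p \<le> a} = space M \<times> {0..a}" for a :: real
      by (auto simp: space_N)
    then show "snd \<in> borel_measurable N"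
      unfolding borel_measurable_iff_le using snd_gen by (simp add: sets_N)
  qed
  ultimately have pair: "(\<lambda>p. (fst p, snd p)) \<in> measurable N (M \<Otimes>\<^sub>M halfline)"
    by (rule measurable_Pair)
  fix A assume A: "A \<in> sets (M \<Otimes>\<^sub>M halfline)"
  have "(\<lambda>p. (fst p, snd p)) -` A \<inter> space N = A"
    using sets.sets_into_space[OF A] by (auto simp: space_N space_pair_halfline)
  then show "A \<in> C" using measurable_sets[OF pair A] by (simp add: sets_N)
qed

lemma sets_pair_halfline_subset_suslin_rects: "sets (M \<Otimes>\<^sub>M halfline) \<subseteq> suslin_rects M"
proof -
  let ?\<Omega> = "space M \<times> {0::real..}"
  have closed_rect: "F \<times> K \<in> suslin_rects M" if "F \<in> sets M" "closed K" for F and K :: "real set"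
    using that by (rule times_closed_in_suslin_rects)
  have "sets (M \<Otimes>\<^sub>M halfline) \<subseteq> {A. A \<subseteq> ?\<Omega> \<and> A \<in> suslin_rects M \<and> ?\<Omega> - A \<in> suslin_rects M}"
  proof (rule sets_pair_halfline_subset)
    show "sigma_algebra ?\<Omega> {A. A \<subseteq> ?\<Omega> \<and> A \<in> suslin_rects M \<and> ?\<Omega> - A \<in> suslin_rects M}"
    proof (rule sigma_algebra_complemented_members)
      show "({} :: ('a \<times> real) set) \<in> suslin_rects M"
        using empty_in_compact_rects compact_rects_subset_suslin_rects by blast
      show "?\<Omega> \<in> suslin_rects M" by (intro closed_rect) auto
    qed (fact suslin_rects_UN suslin_rects_INT)+
  next
    fix F assume F: "F \<in> sets M"
    have "?\<Omega> - F \<times> {0..} = (space M - F) \<times> {0::real..}" by auto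
    then show "F \<times> {0..} \<in> {A. A \<subseteq> ?\<Omega> \<and> A \<in> suslin_rects M \<and> ?\<Omega> - A \<in> suslin_rects M}"
      using F sets.sets_into_space[OF F] by (auto intro!: closed_rect)
  next
    fix a :: real
    have "?\<Omega> - space M \<times> {0..a} = space M \<times> {t. 0 \<le> t \<and> a < t}" by auto
    also have "\<dots> = (\<Union>n. space M \<times> {max 0 (a + 1 / Suc n)..})"
      unfolding nonneg_greaterThan_eq_UN by blast
    also have "\<dots> \<in> suslin_rects M"
      by (intro suslin_rects_UN closed_rect) auto
    finally show "space M \<times> {0..a} \<in> {A. A \<subseteq> ?\<Omega> \<and> A \<in> suslin_rects M \<and> ?\<Omega> - A \<in> suslin_rects M}"
      by (auto intro!: closed_rect)
  qed
  then show ?thesis by blast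
qed

theorem measurable_projection:
  assumes "finite_measure M" "complete_measure M" and "A \<in> sets (M \<Otimes>\<^sub>M halfline)"
  shows "fst ` A \<in> sets M"
  using assms(3) sets_pair_halfline_subset_suslin_rects
  by (intro fst_image_suslin_rects_in_sets[OF assms(1,2)]) blast

section \<open>Debuts\<close>

lemma sets_ex_section_Ico:
  assumes "finite_measure M" "complete_measure M" and S: "S \<in> sets (M \<Otimes>\<^sub>M halfline)"
  shows "{\<omega> \<in> space M. \<exists>u. (\<omega>, u) \<in> S \<and> r \<le> u \<and> ereal u < y} \<in> sets M"
proof -
  have "{u. r \<le> u \<and> ereal u < y} \<in> sets borel" by measurable
  then have "{0..} \<inter> {u. r \<le> u \<and> ereal u < y} \<in> sets halfline"
    by (auto simp: sets_restrict_space)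
  then have "S \<inter> (space M \<times> ({0..} \<inter> {u. r \<le> u \<and> ereal u < y})) \<in> sets (M \<Otimes>\<^sub>M halfline)"
    by (intro sets.Int[OF S] pair_measureI sets.top)
  then have "fst ` (S \<inter> (space M \<times> ({0..} \<inter> {u. r \<le> u \<and> ereal u < y}))) \<in> sets M"
    by (rule measurable_projection[OF assms(1,2)])
  moreover have "fst ` (S \<inter> (space M \<times> ({0..} \<inter> {u. r \<le> u \<and> ereal u < y}))) =
      {\<omega> \<in> space M. \<exists>u. (\<omega>, u) \<in> S \<and> r \<le> u \<and> ereal u < y}"
    using sets.sets_into_space[OF S] by (force simp: space_pair_halfline)
  ultimately show ?thesis by simp
qed

lemma ex_greater_iff_ex_rat:
  "(\<exists>u::real. x < u \<and> P u) \<longleftrightarrow> (\<exists>r::rat. x < of_rat r \<and> (\<exists>u. of_rat r \<le> u \<and> P u))"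
proof
  assume "\<exists>u. x < u \<and> P u"
  then obtain u where "x < u" "P u" by blast
  moreover obtain r :: rat where "x < of_rat r" "of_rat r < u" using of_rat_dense[OF \<open>x < u\<close>] by blast
  ultimately show "\<exists>r::rat. x < of_rat r \<and> (\<exists>u. of_rat r \<le> u \<and> P u)" by (auto intro: less_imp_le)
qed (auto intro: less_le_trans)

definition debut :: "('w \<times> real) set \<Rightarrow> bool \<Rightarrow> real \<Rightarrow> 'w \<Rightarrow> ereal" where
  "debut S c x \<omega> = Inf {ereal u | u. (\<omega>, u) \<in> S \<and> (if c then x \<le> u else x < u)}"

lemma debut_less_iff:
  "debut S c x \<omega> < y \<longleftrightarrow> (\<exists>u. (\<omega>, u) \<in> S \<and> (if c then x \<le> u else x < u) \<and> ereal u < y)"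
  unfolding debut_def Inf_less_iff by blast

lemma debut_le: "(\<omega>, u) \<in> S \<Longrightarrow> (if c then x \<le> u else x < u) \<Longrightarrow> debut S c x \<omega> \<le> ereal u"
  unfolding debut_def by (rule Inf_lower) blast

lemma debut_ge: "ereal x \<le> debut S c x \<omega>"
  unfolding debut_def by (rule Inf_greatest) (auto split: if_splits)

lemma le_debut_iff: "ereal u \<le> debut S True t \<omega> \<longleftrightarrow> (\<forall>s. t \<le> s \<and> s < u \<longrightarrow> (\<omega>, s) \<notin> S)"
  unfolding not_less[symmetric] debut_less_iff by auto

lemma borel_measurable_debut:
  assumes "finite_measure M" "complete_measure M" and S: "S \<in> sets (M \<Otimes>\<^sub>M halfline)"
    and g: "g \<in> borel_measurable (M \<Otimes>\<^sub>M halfline)"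
    and g_nonneg: "\<And>p. p \<in> space (M \<Otimes>\<^sub>M halfline) \<Longrightarrow> 0 \<le> g p"
  shows "(\<lambda>p. debut S c (g p) (fst p)) \<in> borel_measurable (M \<Otimes>\<^sub>M halfline)"
proof (rule borel_measurableI_less)
  fix y :: ereal
  define W where "W r = {\<omega> \<in> space M. \<exists>u. (\<omega>, u) \<in> S \<and> r \<le> u \<and> ereal u < y}" for r
  have [measurable]: "W r \<in> sets M" for r
    unfolding W_def by (rule sets_ex_section_Ico[OF assms(1-3)])
  have "g \<in> measurable (M \<Otimes>\<^sub>M halfline) halfline"
    using g g_nonneg by (intro measurable_restrict_space2) auto
  then have [measurable]: "(\<lambda>p. (fst p, g p)) \<in> measurable (M \<Otimes>\<^sub>M halfline) (M \<Otimes>\<^sub>M halfline)"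
    by (intro measurable_Pair measurable_fst)
  have "debut S c (g p) (fst p) < y \<longleftrightarrow>
      (c \<and> (fst p, g p) \<in> S \<and> ereal (g p) < y) \<or> (\<exists>r::rat. g p < of_rat r \<and> fst p \<in> W (of_rat r))"
    if "p \<in> space (M \<Otimes>\<^sub>M halfline)" for p
  proof -
    have "debut S c (g p) (fst p) < y \<longleftrightarrow>
        (c \<and> (fst p, g p) \<in> S \<and> ereal (g p) < y) \<or> (\<exists>u. g p < u \<and> (fst p, u) \<in> S \<and> ereal u < y)"
      unfolding debut_less_iff by (cases c) (auto simp: order.order_iff_strict)
    also have "\<dots> \<longleftrightarrow> (c \<and> (fst p, g p) \<in> S \<and> ereal (g p) < y) \<or> (\<exists>r::rat. g p < of_rat r \<and> fst p \<in> W (of_rat r))"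
      using that unfolding ex_greater_iff_ex_rat W_def by (auto simp: space_pair_halfline)
    finally show ?thesis .
  qed
  then have "{p \<in> space (M \<Otimes>\<^sub>M halfline). debut S c (g p) (fst p) < y} =
      {p \<in> space (M \<Otimes>\<^sub>M halfline). (c \<and> (fst p, g p) \<in> S \<and> ereal (g p) < y) \<or>
        (\<exists>r::rat. g p < of_rat r \<and> fst p \<in> W (of_rat r))}"
    by blast
  also have "\<dots> \<in> sets (M \<Otimes>\<^sub>M halfline)"
    using S g by measurable
  finally show "{p \<in> space (M \<Otimes>\<^sub>M halfline). debut S c (g p) (fst p) < y} \<in> sets (M \<Otimes>\<^sub>M halfline)" .
qed

lemma ex_section_between_iff_debut:
  fixes S :: "('w \<times> real) set" and c d :: bool and \<omega> :: 'w and x :: real and b :: ereal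
  defines "k \<equiv> debut S c x \<omega>"
  shows "(\<exists>u. (\<omega>, u) \<in> S \<and> (if c then x \<le> u else x < u) \<and> (if d then ereal u \<le> b else ereal u < b)) \<longleftrightarrow>
    k < b \<or> (d \<and> k \<le> b \<and> k \<noteq> \<infinity> \<and> (\<omega>, real_of_ereal k) \<in> S \<and>
      (if c then x \<le> real_of_ereal k else x < real_of_ereal k))"
proof -
  have "ereal x \<le> k" unfolding k_def by (rule debut_ge)
  then have k_real: "ereal (real_of_ereal k) = k" if "k \<noteq> \<infinity>"
    using that by (cases k) auto
  show ?thesis
  proof
    assume "\<exists>u. (\<omega>, u) \<in> S \<and> (if c then x \<le> u else x < u) \<and> (if d then ereal u \<le> b else ereal u < b)"
    then obtain u where u: "(\<omega>, u) \<in> S" "if c then x \<le> u else x < u" "if d then ereal u \<le> b else ereal u < b"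
      by blast
    have "k \<le> ereal u" unfolding k_def using u(1,2) by (rule debut_le)
    show "k < b \<or> (d \<and> k \<le> b \<and> k \<noteq> \<infinity> \<and> (\<omega>, real_of_ereal k) \<in> S \<and>
      (if c then x \<le> real_of_ereal k else x < real_of_ereal k))"
    proof (cases "k < b")
      case False
      with \<open>k \<le> ereal u\<close> u(3) have "d" "k = ereal u" by (auto split: if_splits)
      with u show ?thesis by simp
    qed simp
  next
    assume "k < b \<or> (d \<and> k \<le> b \<and> k \<noteq> \<infinity> \<and> (\<omega>, real_of_ereal k) \<in> S \<and>
      (if c then x \<le> real_of_ereal k else x < real_of_ereal k))"
    then show "\<exists>u. (\<omega>, u) \<in> S \<and> (if c then x \<le> u else x < u) \<and> (if d then ereal u \<le> b else ereal u < b)"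
    proof
      assume "k < b"
      then obtain u where "(\<omega>, u) \<in> S" "if c then x \<le> u else x < u" "ereal u < b"
        unfolding k_def debut_less_iff by blast
      then show ?thesis by (intro exI[of _ u]) auto
    next
      assume attained: "d \<and> k \<le> b \<and> k \<noteq> \<infinity> \<and> (\<omega>, real_of_ereal k) \<in> S \<and>
        (if c then x \<le> real_of_ereal k else x < real_of_ereal k)"
      then show ?thesis using k_real by (intro exI[of _ "real_of_ereal k"]) auto
    qed
  qed
qed

lemma sets_ex_section_between:
  assumes "finite_measure M" "complete_measure M" and S: "S \<in> sets (M \<Otimes>\<^sub>M halfline)"
    and g: "g \<in> borel_measurable (M \<Otimes>\<^sub>M halfline)"
    and g_nonneg: "\<And>p. p \<in> space (M \<Otimes>\<^sub>M halfline) \<Longrightarrow> 0 \<le> g p"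
    and b: "b \<in> borel_measurable (M \<Otimes>\<^sub>M halfline)"
    and d: "Measurable.pred (M \<Otimes>\<^sub>M halfline) d"
  shows "{p \<in> space (M \<Otimes>\<^sub>M halfline). \<exists>u. (fst p, u) \<in> S \<and> (if c then g p \<le> u else g p < u) \<and>
    (if d p then ereal u \<le> b p else ereal u < b p)} \<in> sets (M \<Otimes>\<^sub>M halfline)"
proof -
  define k where "k p = debut S c (g p) (fst p)" for p
  have k[measurable]: "k \<in> borel_measurable (M \<Otimes>\<^sub>M halfline)"
    unfolding k_def by (rule borel_measurable_debut[OF assms(1-5)])
  have "0 \<le> real_of_ereal (k p)" if "p \<in> space (M \<Otimes>\<^sub>M halfline)" for p
    using debut_ge[of "g p" S c "fst p"] g_nonneg[OF that] unfolding k_def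
    by (cases "k p") (auto simp: k_def)
  then have "(\<lambda>p. real_of_ereal (k p)) \<in> measurable (M \<Otimes>\<^sub>M halfline) halfline"
    by (intro measurable_restrict_space2) auto
  then have [measurable]: "(\<lambda>p. (fst p, real_of_ereal (k p))) \<in> measurable (M \<Otimes>\<^sub>M halfline) (M \<Otimes>\<^sub>M halfline)"
    by (intro measurable_Pair measurable_fst)
  have "{p \<in> space (M \<Otimes>\<^sub>M halfline). \<exists>u. (fst p, u) \<in> S \<and> (if c then g p \<le> u else g p < u) \<and>
      (if d p then ereal u \<le> b p else ereal u < b p)} =
    {p \<in> space (M \<Otimes>\<^sub>M halfline). k p < b p \<or> (d p \<and> k p \<le> b p \<and> k p \<noteq> \<infinity> \<and>
      (fst p, real_of_ereal (k p)) \<in> S \<and> (if c then g p \<le> real_of_ereal (k p) else g p < real_of_ereal (k p)))}"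
    unfolding k_def ex_section_between_iff_debut ..
  also have "\<dots> \<in> sets (M \<Otimes>\<^sub>M halfline)"
    using S g b d by measurable
  finally show ?thesis .
qed

section \<open>Measurability of the semantics\<close>

lemma sat_set_eq: "sat_set M X B \<phi> = {p \<in> space (M \<Otimes>\<^sub>M halfline). holds X B (fst p) (snd p) \<phi>}"
  by (auto simp: sat_set_def space_pair_halfline)

lemma holds_Until_iff:
  "holds X B \<omega> t (Until \<phi>1 (Intv l lc U uc) \<phi>2) \<longleftrightarrow>
    (\<exists>u. holds X B \<omega> u \<phi>2 \<and> (if lc \<or> l < 0 then t + max 0 l \<le> u else t + max 0 l < u) \<and>
      (if uc then ereal u \<le> U + ereal t else ereal u < U + ereal t) \<and>
      (\<forall>s. t \<le> s \<and> s < u \<longrightarrow> holds X B \<omega> s \<phi>1))"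
proof -
  have lower: "(0 \<le> s \<and> (if lc then l \<le> s else l < s)) \<longleftrightarrow>
      (if lc \<or> l < 0 then t + max 0 l \<le> t + s else t + max 0 l < t + s)" for s
    by (auto simp: max_def)
  have upper: "(if uc then ereal s \<le> U else ereal s < U) \<longleftrightarrow>
      (if uc then ereal (t + s) \<le> U + ereal t else ereal (t + s) < U + ereal t)" for s
    by (cases U) auto
  have intv: "s \<in> intv_set (Intv l lc U uc) \<longleftrightarrow>
      (if lc \<or> l < 0 then t + max 0 l \<le> t + s else t + max 0 l < t + s) \<and>
      (if uc then ereal (t + s) \<le> U + ereal t else ereal (t + s) < U + ereal t)" for s
    by (simp only: intv_set_def interval.sel mem_Collect_eq conj_assoc[symmetric] lower upper)
  show ?thesis
  proof
    assume "holds X B \<omega> t (Until \<phi>1 (Intv l lc U uc) \<phi>2)"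
    then obtain s where "s \<in> intv_set (Intv l lc U uc)" "holds X B \<omega> (t + s) \<phi>2"
        "\<forall>s'\<in>{t..<t + s}. holds X B \<omega> s' \<phi>1"
      by auto
    then show "\<exists>u. holds X B \<omega> u \<phi>2 \<and> (if lc \<or> l < 0 then t + max 0 l \<le> u else t + max 0 l < u) \<and>
        (if uc then ereal u \<le> U + ereal t else ereal u < U + ereal t) \<and>
        (\<forall>s. t \<le> s \<and> s < u \<longrightarrow> holds X B \<omega> s \<phi>1)"
      unfolding intv by (intro exI[of _ "t + s"]) simp
  next
    assume "\<exists>u. holds X B \<omega> u \<phi>2 \<and> (if lc \<or> l < 0 then t + max 0 l \<le> u else t + max 0 l < u) \<and>
        (if uc then ereal u \<le> U + ereal t else ereal u < U + ereal t) \<and>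
        (\<forall>s. t \<le> s \<and> s < u \<longrightarrow> holds X B \<omega> s \<phi>1)"
    then obtain u where u: "holds X B \<omega> u \<phi>2" "if lc \<or> l < 0 then t + max 0 l \<le> u else t + max 0 l < u"
        "if uc then ereal u \<le> U + ereal t else ereal u < U + ereal t"
        "\<forall>s. t \<le> s \<and> s < u \<longrightarrow> holds X B \<omega> s \<phi>1"
      by blast
    have shift: "t + (u - t) = u" by simp
    have "u - t \<in> intv_set (Intv l lc U uc)" unfolding intv shift using u(2,3) by (rule conjI)
    moreover have "holds X B \<omega> (t + (u - t)) \<phi>2" "\<forall>s'\<in>{t..<t + (u - t)}. holds X B \<omega> s' \<phi>1"
      using u(1,4) by auto
    ultimately show "holds X B \<omega> t (Until \<phi>1 (Intv l lc U uc) \<phi>2)"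
      unfolding holds.simps by blast
  qed
qed

lemma le_and_bound_iff_min:
  fixes u h b :: "'a::linorder"
  shows "(u \<le> h \<and> (if d then u \<le> b else u < b)) \<longleftrightarrow> (if d \<or> h < b then u \<le> min h b else u < min h b)"
  by (cases d; cases "h < b") (auto simp: min_def)

lemma holds_Until_iff_debut:
  fixes M :: "'w measure" and X :: "real \<Rightarrow> 'w \<Rightarrow> 'e" and B :: "'ap \<Rightarrow> 'e set"
    and \<phi>1 :: "'ap mtl" and \<omega> :: 'w and t :: real
  assumes "\<omega> \<in> space M" "0 \<le> t"
  defines "h \<equiv> debut (space (M \<Otimes>\<^sub>M halfline) - sat_set M X B \<phi>1) True t \<omega>"
  shows "holds X B \<omega> t (Until \<phi>1 (Intv l lc U uc) \<phi>2) \<longleftrightarrow>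
    (\<exists>u. (\<omega>, u) \<in> sat_set M X B \<phi>2 \<and> (if lc \<or> l < 0 then t + max 0 l \<le> u else t + max 0 l < u) \<and>
      (if uc \<or> h < U + ereal t then ereal u \<le> min h (U + ereal t) else ereal u < min h (U + ereal t)))"
proof -
  have phi1: "(\<forall>s. t \<le> s \<and> s < u \<longrightarrow> holds X B \<omega> s \<phi>1) \<longleftrightarrow> ereal u \<le> h" for u
    unfolding h_def le_debut_iff using assms(1,2) by (auto simp: sat_set_def space_pair_halfline)
  have phi2: "(\<omega>, u) \<in> sat_set M X B \<phi>2 \<longleftrightarrow> holds X B \<omega> u \<phi>2"
    if "(if lc \<or> l < 0 then t + max 0 l \<le> u else t + max 0 l < u)" for u
    using that assms(1,2) by (auto simp: sat_set_def split: if_splits)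
  show ?thesis
    unfolding holds_Until_iff phi1 le_and_bound_iff_min[symmetric] using phi2 by blast
qed

lemma sat_set_Until_in_sets:
  assumes "finite_measure M" "complete_measure M"
    and S1: "sat_set M X B \<phi>1 \<in> sets (M \<Otimes>\<^sub>M halfline)"
    and S2: "sat_set M X B \<phi>2 \<in> sets (M \<Otimes>\<^sub>M halfline)"
  shows "sat_set M X B (Until \<phi>1 (Intv l lc U uc) \<phi>2) \<in> sets (M \<Otimes>\<^sub>M halfline)"
proof -
  define h where "h p = debut (space (M \<Otimes>\<^sub>M halfline) - sat_set M X B \<phi>1) True (snd p) (fst p)" for p
  have [measurable]: "h \<in> borel_measurable (M \<Otimes>\<^sub>M halfline)"
    unfolding h_def
    by (intro borel_measurable_debut[OF assms(1,2) sets.Diff[OF sets.top S1] measurable_snd_halfline])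
      (auto simp: space_pair_halfline)
  have [measurable]: "snd \<in> borel_measurable (M \<Otimes>\<^sub>M halfline)" by (rule measurable_snd_halfline)
  have "sat_set M X B (Until \<phi>1 (Intv l lc U uc) \<phi>2) =
    {p \<in> space (M \<Otimes>\<^sub>M halfline). \<exists>u. (fst p, u) \<in> sat_set M X B \<phi>2 \<and>
      (if lc \<or> l < 0 then snd p + max 0 l \<le> u else snd p + max 0 l < u) \<and>
      (if uc \<or> h p < U + ereal (snd p) then ereal u \<le> min (h p) (U + ereal (snd p))
       else ereal u < min (h p) (U + ereal (snd p)))}"
    unfolding sat_set_eq[of _ _ _ "Until _ _ _"]
  proof (intro Collect_cong conj_cong refl)
    fix p assume "p \<in> space (M \<Otimes>\<^sub>M halfline)"
    then obtain \<omega> t where p: "p = (\<omega>, t)" "\<omega> \<in> space M" "0 \<le> t" by (auto simp: space_pair_halfline)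
    show "holds X B (fst p) (snd p) (Until \<phi>1 (Intv l lc U uc) \<phi>2) \<longleftrightarrow>
      (\<exists>u. (fst p, u) \<in> sat_set M X B \<phi>2 \<and>
        (if lc \<or> l < 0 then snd p + max 0 l \<le> u else snd p + max 0 l < u) \<and>
        (if uc \<or> h p < U + ereal (snd p) then ereal u \<le> min (h p) (U + ereal (snd p))
         else ereal u < min (h p) (U + ereal (snd p))))"
      unfolding h_def p(1) fst_conv snd_conv by (rule holds_Until_iff_debut[OF p(2,3)])
  qed
  also have "\<dots> \<in> sets (M \<Otimes>\<^sub>M halfline)"
  proof (rule sets_ex_section_between[OF assms(1,2) S2])
    show "(\<lambda>p. snd p + max 0 l) \<in> borel_measurable (M \<Otimes>\<^sub>M halfline)" by measurable
    show "0 \<le> snd p + max 0 l" if "p \<in> space (M \<Otimes>\<^sub>M halfline)" for p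
      using that by (auto simp: space_pair_halfline)
    show "(\<lambda>p. min (h p) (U + ereal (snd p))) \<in> borel_measurable (M \<Otimes>\<^sub>M halfline)" by measurable
    show "Measurable.pred (M \<Otimes>\<^sub>M halfline) (\<lambda>p. uc \<or> h p < U + ereal (snd p))" by measurable
  qed
  finally show ?thesis .
qed

lemma sat_set_in_sets:
  assumes "finite_measure M" "complete_measure M"
    and X: "(\<lambda>(\<omega>, t). X t \<omega>) \<in> measurable (M \<Otimes>\<^sub>M halfline) borel"
    and B: "\<And>a. B a \<in> sets borel"
  shows "sat_set M X B \<phi> \<in> sets (M \<Otimes>\<^sub>M halfline)"
proof (induction \<phi>)
  case (Atom a)
  have "sat_set M X B (Atom a) = (\<lambda>(\<omega>, t). X t \<omega>) -` B a \<inter> space (M \<Otimes>\<^sub>M halfline)"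
    by (auto simp: sat_set_eq)
  then show ?case using measurable_sets[OF X B] by simp
next
  case (And \<phi>1 \<phi>2)
  have "sat_set M X B (And \<phi>1 \<phi>2) = sat_set M X B \<phi>1 \<inter> sat_set M X B \<phi>2"
    by (auto simp: sat_set_eq)
  then show ?case using And by auto
next
  case (Not \<phi>)
  have "sat_set M X B (Not \<phi>) = space (M \<Otimes>\<^sub>M halfline) - sat_set M X B \<phi>"
    by (auto simp: sat_set_eq)
  then show ?case using Not by auto
next
  case (Until \<phi>1 I \<phi>2)
  then show ?case by (cases I) (simp only: sat_set_Until_in_sets[OF assms(1,2)])
qed

theorem theorem4p7:
  fixes M :: "'w measure"
    and X :: "real \<Rightarrow> 'w \<Rightarrow> 'e::polish_space"
    and B :: "'ap \<Rightarrow> 'e set"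
  assumes "prob_space M"
    and "complete_measure M"
    and "(\<lambda>(\<omega>, t). X t \<omega>) \<in> measurable (M \<Otimes>\<^sub>M restrict_space borel {0..}) borel"
    and "\<And>a. B a \<in> sets borel"
  shows "sat_set M X B \<phi> \<in> sets (M \<Otimes>\<^sub>M restrict_space borel {0..})
         \<and> (\<forall>t\<ge>0. sat_set_at M X B \<phi> t \<in> sets M)"
proof -
  have "finite_measure M" using assms(1) by (simp add: prob_space_def)
  then have sets: "sat_set M X B \<phi> \<in> sets (M \<Otimes>\<^sub>M halfline)"
    using assms(2-4) by (rule sat_set_in_sets)
  moreover have "sat_set_at M X B \<phi> t \<in> sets M" if "0 \<le> t" for t
  proof -
    have "sat_set_at M X B \<phi> t = (\<lambda>\<omega>. (\<omega>, t)) -` sat_set M X B \<phi>"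
      using that by (auto simp: sat_set_at_def sat_set_def)
    then show ?thesis using sets_Pair2[OF sets] by simp
  qed
  ultimately show ?thesis by blast
qed

end
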